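(* Let $p,q$ be integers and let $(u_n)_{n\ge0}$ be the Lucas sequence defined by $u_0=0$, $u_1=1$ and $u_{n+2}=pu_{n+1}+qu_n$ for all $n\ge0$. Then the following are equivalent: (a) for every $k\ge1$ the integers $u_0,\dots,u_{2^k-1}$ are pairwise distinct and $\mathcal{D}_{\mathbf u}(2^k)=2^k$ (i.e. $u_0,\dots,u_{2^k-1}$ are pairwise incongruent modulo $2^k$); (b) $p\equiv 2\pmod 4$ and $q\equiv 3\pmod 4$.
   Context: For a sequence $\mathbf w=(w_n)_{n\ge 0}$ of integers and a positive integer $n$ such that $w_0,\dots,w_{n-1}$ are pairwise distinct, the discriminator $\mathcal{D}_{\mathbf w}(n)$ is the smallest positive integer $m$ such that $w_0,\dots,w_{n-1}$ are pairwise incongruent modulo $m$. *)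

theory Defs
  imports Main
begin

fun lucas :: "int \<Rightarrow> int \<Rightarrow> nat \<Rightarrow> int" where
  "lucas p q 0 = 0"
| "lucas p q (Suc 0) = 1"
| "lucas p q (Suc (Suc n)) = p * lucas p q (Suc n) + q * lucas p q n"

definition first_distinct :: "(nat \<Rightarrow> int) \<Rightarrow> nat \<Rightarrow> bool" where
  "first_distinct w n \<longleftrightarrow> (\<forall>i<n. \<forall>j<n. i \<noteq> j \<longrightarrow> w i \<noteq> w j)"

definition discriminator :: "(nat \<Rightarrow> int) \<Rightarrow> nat \<Rightarrow> nat" where
  "discriminator w n = (LEAST m. m > 0 \<and>
      (\<forall>i<n. \<forall>j<n. i \<noteq> j \<longrightarrow> w i mod int m \<noteq> w j mod int m))"

end

theory Submission
  imports Defs "HOL-Number_Theory.Cong"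
begin

text \<open>
  If \<open>p \<equiv> 2\<close> and \<open>q \<equiv> 3 (mod 4)\<close>, the doubling formulas show inductively that
  \<open>u(2^k) = 2^k a\<close> and \<open>u(2^k + 1) = 1 + 2^k b\<close> with \<open>a, b\<close> odd.  Comparing the recurrences
  of \<open>u(n + 2^k)\<close> and \<open>u n\<close> then gives \<open>u(n + 2^k) \<equiv> u n + 2^k (mod 2^(k+1))\<close>. Hence terms of
  \<open>u 0, \<dots>, u(2^(k+1) - 1)\<close> congruent mod \<open>2^(k+1)\<close> have indices congruent mod \<open>2^k\<close> by
  induction, and then equal indices, so these terms are pairwise incongruent mod \<open>2^(k+1)\<close>.
  Conversely, incongruence of \<open>u 0, \<dots>, u 3\<close> mod 4 leaves only \<open>(p, q) \<equiv> (2, 3)\<close> or \<open>(3, 1) (mod 4)\<close>,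
  and in the second case \<open>u 6 = p (p\<^sup>2 + q) (p\<^sup>2 + 3q) \<equiv> 0 = u 0 (mod 8)\<close>.
  By the pigeonhole principle, \<open>n\<close> terms have discriminator \<open>n\<close> exactly when they are
  incongruent mod \<open>n\<close>.
\<close>

definition pairwise_incongruent :: "(nat \<Rightarrow> int) \<Rightarrow> nat \<Rightarrow> int \<Rightarrow> bool" where
  "pairwise_incongruent w n m \<longleftrightarrow> (\<forall>i<n. \<forall>j<n. i \<noteq> j \<longrightarrow> w i mod m \<noteq> w j mod m)"

lemma pairwise_incongruentD:
  "pairwise_incongruent w n m \<Longrightarrow> i < n \<Longrightarrow> j < n \<Longrightarrow> i \<noteq> j \<Longrightarrow> w i mod m \<noteq> w j mod m"
  unfolding pairwise_incongruent_def by blast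

lemma first_distinct_if_pairwise_incongruent:
  "pairwise_incongruent w n m \<Longrightarrow> first_distinct w n"
  unfolding pairwise_incongruent_def first_distinct_def by metis

lemma pairwise_incongruent_imp_le:
  assumes "pairwise_incongruent w n (int m)" "0 < m"
  shows "n \<le> m"
proof -
  have "inj_on (\<lambda>i. w i mod int m) {..<n}"
    using assms(1) unfolding pairwise_incongruent_def inj_on_def by blast
  moreover have "(\<lambda>i. w i mod int m) ` {..<n} \<subseteq> {0..<int m}"
    using assms(2) by auto
  ultimately have "card {..<n} \<le> card {0..<int m}"
    by (intro card_inj_on_le) auto
  then show ?thesis by simp
qed

lemma pairwise_incongruent_large_modulus:
  assumes "first_distinct w n"
  shows "\<exists>m>0. pairwise_incongruent w n (int m)"
proof -
  define B where "B = Max ((\<lambda>i. \<bar>w i\<bar>) ` {..<n})"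
  define m where "m = 2 * nat B + 1"
  have bound: "\<bar>w i\<bar> \<le> B" if "i < n" for i
    unfolding B_def using that by (intro Max_ge) auto
  have "pairwise_incongruent w n (int m)"
    unfolding pairwise_incongruent_def
  proof (intro allI impI)
    fix i j assume "i < n" "j < n" "i \<noteq> j"
    then have "w i \<noteq> w j"
      using assms unfolding first_distinct_def by blast
    have "\<bar>w i - w j\<bar> < int m"
      using bound[OF \<open>i < n\<close>] bound[OF \<open>j < n\<close>] unfolding m_def by linarith
    have "\<not> int m dvd w i - w j"
    proof
      assume "int m dvd w i - w j"
      then have "\<bar>int m\<bar> \<le> \<bar>w i - w j\<bar>"
        using \<open>w i \<noteq> w j\<close> by (intro dvd_imp_le_int) simp_all
      with \<open>\<bar>w i - w j\<bar> < int m\<close> show False by simp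
    qed
    then show "w i mod int m \<noteq> w j mod int m"
      by (simp add: mod_eq_dvd_iff)
  qed
  then show ?thesis by (intro exI[of _ m]) (simp add: m_def)
qed

lemma discriminator_eq_self_iff:
  assumes "first_distinct w n" "0 < n"
  shows "discriminator w n = n \<longleftrightarrow> pairwise_incongruent w n (int n)"
proof -
  let ?P = "\<lambda>m. 0 < m \<and> pairwise_incongruent w n (int m)"
  have disc: "discriminator w n = (LEAST m. ?P m)"
    by (simp add: discriminator_def pairwise_incongruent_def)
  have least: "?P (LEAST m. ?P m)"
    using pairwise_incongruent_large_modulus[OF assms(1)] by (rule LeastI_ex)
  show ?thesis
  proof
    assume "discriminator w n = n"
    then show "pairwise_incongruent w n (int n)" using least disc by simp
  next
    assume "pairwise_incongruent w n (int n)"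
    then have "(LEAST m. ?P m) = n"
      using assms(2) by (intro Least_equality) (auto intro: pairwise_incongruent_imp_le)
    then show "discriminator w n = n" using disc by simp
  qed
qed

lemma lucas_cong:
  "[p = p'] (mod m) \<Longrightarrow> [q = q'] (mod m) \<Longrightarrow> [lucas p q n = lucas p' q' n] (mod m)"
proof (induction p q n rule: lucas.induct)
  case (3 p q n)
  then show ?case by (auto intro: cong_add cong_mult)
qed simp_all

lemma lucas_add:
  "lucas p q (m + n + 1) = lucas p q (m + 1) * lucas p q (n + 1) + q * lucas p q m * lucas p q n"
proof (induction p q m rule: lucas.induct)
  case (3 p q m)
  have "lucas p q (Suc (Suc m) + n + 1)
        = p * lucas p q (Suc m + n + 1) + q * lucas p q (m + n + 1)" by simp
  also have "\<dots> = (p * lucas p q (Suc m + 1) + q * lucas p q (m + 1)) * lucas p q (n + 1)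
        + q * (p * lucas p q (Suc m) + q * lucas p q m) * lucas p q n"
    unfolding 3 by (simp add: algebra_simps)
  finally show ?case by simp
qed simp_all

lemma lucas_double_Suc:
  "lucas p q (2 * n + 1) = lucas p q (n + 1)^2 + q * lucas p q n ^ 2"
  using lucas_add[of p q n n] by (simp add: power2_eq_square mult_2)

lemma lucas_double:
  "lucas p q (2 * (n + 1)) = lucas p q (n + 1) * (2 * lucas p q (n + 2) - p * lucas p q (n + 1))"
  using lucas_add[of p q n "n+1"] by (simp add: algebra_simps eval_nat_numeral)

lemma lucas_two_pow_odd_parts:
  fixes p q :: int
  assumes p: "p mod 4 = 2" and q: "q mod 4 = 3" and "1 \<le> k"
  shows "\<exists>a b. odd a \<and> odd b \<and> lucas p q (2^k) = 2^k * a \<and> lucas p q (2^k + 1) = 1 + 2^k * b"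
proof -
  obtain s r where s: "p = 4 * s + 2" and r: "q = 4 * r + 3"
    using p q by (metis div_mod_decomp_int mult.commute)
  show ?thesis
    using \<open>1 \<le> k\<close>
  proof (induction k rule: nat_induct_at_least)
    case base
    have "lucas p q (2^1) = 2^1 * (2 * s + 1)" "lucas p q (2^1 + 1) = 1 + 2^1 * (2 * (4 * s^2 + 4 * s + r + 1) + 1)"
      by (simp_all add: eval_nat_numeral s r algebra_simps)
    moreover have "odd (2 * s + 1)" "odd (2 * (4 * s^2 + 4 * s + r + 1) + 1)" by simp_all
    ultimately show ?case by blast
  next
    case (Suc k)
    then obtain a b where "odd a" "odd b"
      and a: "lucas p q (2^k) = 2^k * a" and b: "lucas p q (2^k + 1) = 1 + 2^k * b"
      by blast
    obtain m where m: "(2::int)^k = 2 * m"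
      using \<open>1 \<le> k\<close> by (cases k) auto
    obtain n where n: "(2::nat)^k = n + 1"
      by (cases "(2::nat)^k") auto
    have "lucas p q (2^Suc k) = lucas p q (n + 1) * (2 * lucas p q (n + 2) - p * lucas p q (n + 1))"
      using lucas_double[of p q n] n by simp
    also have "\<dots> = 2^Suc k * (a * (1 + 2 * m * (b - (2 * s + 1) * a)))"
    proof -
      have "lucas p q (n + 1) = 2^k * a" "lucas p q (n + 2) = 1 + 2^k * b"
        using a b n by (simp_all add: numeral_2_eq_2)
      then show ?thesis by (simp add: s m algebra_simps)
    qed
    finally have index_even: "lucas p q (2^Suc k) = 2^Suc k * (a * (1 + 2 * m * (b - (2 * s + 1) * a)))" .
    have "lucas p q (2^Suc k + 1) = lucas p q (2^k + 1)^2 + q * lucas p q (2^k) ^ 2"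
      using lucas_double_Suc[of p q "2^k"] by simp
    also have "\<dots> = 1 + 2^Suc k * (b + m * (b^2 + q * a^2))"
      unfolding a b by (simp add: m power2_eq_square algebra_simps)
    finally have index_odd: "lucas p q (2^Suc k + 1) = 1 + 2^Suc k * (b + m * (b^2 + q * a^2))" .
    have "odd q" using r by simp
    then have "odd (a * (1 + 2 * m * (b - (2 * s + 1) * a)))" "odd (b + m * (b^2 + q * a^2))"
      using \<open>odd a\<close> \<open>odd b\<close> by simp_all
    with index_even index_odd show ?case by blast
  qed
qed

lemma mult_odd_cong_self:
  fixes m a :: int
  assumes "odd a"
  shows "[m * a = m] (mod 2 * m)"
proof -
  obtain c where "a = 2 * c + 1" using assms by (rule oddE)
  then show ?thesis by (simp add: cong_iff_dvd_diff algebra_simps)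
qed

lemma lucas_shift_two_pow:
  fixes p q :: int
  assumes p: "p mod 4 = 2" and q: "q mod 4 = 3" and "1 \<le> k"
  shows "[lucas p q (n + 2^k) = lucas p q n + 2^k] (mod 2^Suc k)"
proof -
  obtain a b where "odd a" "odd b"
    and a: "lucas p q (2^k) = 2^k * a" and b: "lucas p q (2^k + 1) = 1 + 2^k * b"
    using lucas_two_pow_odd_parts[OF p q \<open>1 \<le> k\<close>] by blast
  show ?thesis
  proof (induction n rule: induct_nat_012)
    case 0
    show ?case using mult_odd_cong_self[OF \<open>odd a\<close>, of "2^k"] by (simp add: a)
  next
    case 1
    show ?case using mult_odd_cong_self[OF \<open>odd b\<close>, of "2^k"] b
      by (simp add: cong_add_lcancel add.commute)
  next
    case (ge2 n)
    have "lucas p q (Suc (Suc n) + 2^k) = p * lucas p q (Suc n + 2^k) + q * lucas p q (n + 2^k)"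
      by simp
    also have "[\<dots> = p * (lucas p q (Suc n) + 2^k) + q * (lucas p q n + 2^k)] (mod 2^Suc k)"
      using ge2 by (intro cong_add cong_mult cong_refl)
    also have "p * (lucas p q (Suc n) + 2^k) + q * (lucas p q n + 2^k)
        = lucas p q (Suc (Suc n)) + 2^k + 2^k * (p + q - 1)"
      by (simp add: algebra_simps)
    also have "[lucas p q (Suc (Suc n)) + 2^k + 2^k * (p + q - 1) = lucas p q (Suc (Suc n)) + 2^k] (mod 2^Suc k)"
    proof -
      have "2 dvd p + q - 1" using p q by presburger
      then have "2^Suc k dvd 2^k * (p + q - 1)" by (simp add: mult_dvd_mono)
      then show ?thesis by (simp add: cong_iff_dvd_diff)
    qed
    finally show ?case .
  qed
qed

lemma lucas_shift_two_pow_iterate: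
  fixes p q :: int
  assumes "p mod 4 = 2" and "q mod 4 = 3" and "1 \<le> k"
  shows "[lucas p q (n + t * 2^k) = lucas p q n + int t * 2^k] (mod 2^Suc k)"
proof (induction t)
  case (Suc t)
  have "n + Suc t * 2^k = (n + t * 2^k) + 2^k" by simp
  then have "[lucas p q (n + Suc t * 2^k) = lucas p q (n + t * 2^k) + 2^k] (mod 2^Suc k)"
    using lucas_shift_two_pow[OF assms] by metis
  also have "[lucas p q (n + t * 2^k) + 2^k = lucas p q n + int t * 2^k + 2^k] (mod 2^Suc k)"
    using Suc by (rule cong_add) simp
  finally show ?case by (simp add: algebra_simps)
qed simp

lemma lucas_inj_mod_two_pow:
  fixes p q :: int
  assumes p: "p mod 4 = 2" and q: "q mod 4 = 3" and "1 \<le> k"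
    and "i < 2^k" "j < 2^k" "[lucas p q i = lucas p q j] (mod 2^k)"
  shows "i = j"
  using assms(3-)
proof (induction k arbitrary: i j rule: nat_induct_at_least)
  case base
  then show ?case by (auto simp: less_2_cases_iff cong_def)
next
  case (Suc k)
  define N :: nat where "N = 2^k"
  have shift: "[lucas p q n = lucas p q (n mod N) + int (n div N) * 2^k] (mod 2^Suc k)" for n
    using lucas_shift_two_pow_iterate[OF p q \<open>1 \<le> k\<close>, of "n mod N" "n div N"]
    by (simp add: N_def mod_div_mult_eq)
  have "[lucas p q (i mod N) + int (i div N) * 2^k = lucas p q (j mod N) + int (j div N) * 2^k] (mod 2^Suc k)"
    (is "[?ri + ?ti = ?rj + ?tj] (mod _)")
    using shift[of i] shift[of j] Suc.prems(3) by (meson cong_sym cong_trans)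
  then have "[?ri + ?ti = ?rj + ?tj] (mod 2^k)"
    by (rule cong_dvd_modulus) simp
  moreover have "[?ti = 0] (mod 2^k)" "[?tj = 0] (mod 2^k)"
    by (simp_all add: cong_mult_self_right)
  ultimately have "[?ri + 0 = ?rj + 0] (mod 2^k)"
    by (meson cong_add cong_refl cong_sym cong_trans)
  then have "i mod N = j mod N"
    using Suc.IH[of "i mod N" "j mod N"] by (simp add: N_def)
  then have "[?ti = ?tj] (mod 2 * 2^k)"
    using \<open>[?ri + ?ti = ?rj + ?tj] (mod 2^Suc k)\<close> by (simp add: cong_add_lcancel)
  then have "[int (i div N) = int (j div N)] (mod 2)"
    by (simp add: cong_iff_dvd_diff flip: left_diff_distrib)
  moreover have "i div N < 2" "j div N < 2"
    using Suc.prems(1,2) by (simp_all add: N_def less_mult_imp_div_less)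
  ultimately have "i div N = j div N"
    by (auto simp: less_2_cases_iff cong_def)
  with \<open>i mod N = j mod N\<close> show "i = j"
    by (metis div_mult_mod_eq)
qed

lemma lucas_pairwise_incongruent_two_pow:
  fixes p q :: int
  assumes "p mod 4 = 2" and "q mod 4 = 3" and "1 \<le> k"
  shows "pairwise_incongruent (lucas p q) (2^k) (2^k)"
  unfolding pairwise_incongruent_def
  using lucas_inj_mod_two_pow[OF assms] by (auto simp: cong_def)

lemma lucas_incongruent_mod_4_cases:
  fixes p q :: int
  assumes "pairwise_incongruent (lucas p q) 4 4"
  shows "p mod 4 = 2 \<and> q mod 4 = 3 \<or> p mod 4 = 3 \<and> q mod 4 = 1"
proof -
  define a b where "a = p mod 4" and "b = q mod 4"
  have "lucas p q n mod 4 = lucas a b n mod 4" for n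
    using lucas_cong[of p a 4 q b n] by (simp add: cong_def a_def b_def)
  then have incong: "lucas a b i mod 4 \<noteq> lucas a b j mod 4" if "i < 4" "j < 4" "i \<noteq> j" for i j
    using pairwise_incongruentD[OF assms that] by simp
  have "lucas a b 2 = a" "lucas a b 3 = a * a + b"
    by (simp_all add: eval_nat_numeral)
  then have "lucas a b 2 mod 4 \<notin> {0, 1}" "lucas a b 3 mod 4 \<notin> {0, 1, a mod 4}"
    using incong[of 2 0] incong[of 2 1] incong[of 3 0] incong[of 3 1] incong[of 3 2] by simp_all
  moreover have "a \<in> {0, 1, 2, 3}" "b \<in> {0, 1, 2, 3}"
    unfolding a_def b_def by auto
  ultimately show ?thesis
    unfolding a_def[symmetric] b_def[symmetric]
    by (simp only: insert_iff empty_iff simp_thms) (elim disjE; simp add: eval_nat_numeral)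
qed

lemma lucas_6_dvd_8:
  fixes p q :: int
  assumes "p mod 4 = 3" "q mod 4 = 1"
  shows "8 dvd lucas p q 6"
proof -
  obtain s r where s: "p = 4 * s + 3" and r: "q = 4 * r + 1"
    using assms by (metis div_mod_decomp_int mult.commute)
  have "lucas p q 6 = p * (p^2 + q) * (p^2 + 3 * q)"
    by (simp add: eval_nat_numeral algebra_simps)
  also have "\<dots> = 8 * (p * (8 * s^2 + 12 * s + 2 * r + 5) * (4 * s^2 + 6 * s + 3 * r + 3))"
    by (simp add: s r power2_eq_square algebra_simps)
  finally show ?thesis by simp
qed

lemma lucas_params_if_incongruent_mod_4_and_8:
  fixes p q :: int
  assumes "pairwise_incongruent (lucas p q) 4 4" and "pairwise_incongruent (lucas p q) 8 8"
  shows "p mod 4 = 2 \<and> q mod 4 = 3"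
proof (rule ccontr)
  assume "\<not> (p mod 4 = 2 \<and> q mod 4 = 3)"
  then have "8 dvd lucas p q 6"
    using lucas_incongruent_mod_4_cases[OF assms(1)] lucas_6_dvd_8 by blast
  then show False
    using pairwise_incongruentD[OF assms(2), of 6 0] by simp
qed

theorem theorem5:
  fixes p q :: int
  shows "(\<forall>k::nat. k \<ge> 1 \<longrightarrow>
            first_distinct (lucas p q) (2 ^ k) \<and>
            discriminator (lucas p q) (2 ^ k) = 2 ^ k)
         \<longleftrightarrow> (p mod 4 = 2 \<and> q mod 4 = 3)"
proof
  assume "\<forall>k::nat. k \<ge> 1 \<longrightarrow>
            first_distinct (lucas p q) (2 ^ k) \<and> discriminator (lucas p q) (2 ^ k) = 2 ^ k"
  then have "pairwise_incongruent (lucas p q) (2^k) (2^k)" if "1 \<le> k" for k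
    using discriminator_eq_self_iff[of "lucas p q" "2^k"] that by simp
  from this[of 2] this[of 3] show "p mod 4 = 2 \<and> q mod 4 = 3"
    by (intro lucas_params_if_incongruent_mod_4_and_8) simp_all
next
  assume "p mod 4 = 2 \<and> q mod 4 = 3"
  then have "pairwise_incongruent (lucas p q) (2^k) (2^k)" if "1 \<le> k" for k
    using lucas_pairwise_incongruent_two_pow that by blast
  then show "\<forall>k::nat. k \<ge> 1 \<longrightarrow>
            first_distinct (lucas p q) (2 ^ k) \<and> discriminator (lucas p q) (2 ^ k) = 2 ^ k"
    using first_distinct_if_pairwise_incongruent discriminator_eq_self_iff by fastforce
qed

end
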